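(* Let $m,n\ge 1$ and let $T$ be an invertible $mn\times mn$ Toeplitz-block Toeplitz matrix $T=\{\mathcal{T}_{i-k}\}_{i,k=1}^n$, $\mathcal{T}_r=\{t_r^{(j-\ell)}\}_{j,\ell=1}^m$. Define $$\omega(\lambda,\mu)=\mathbf{1}^*(A_1^*-\mu_1 I)^{-1}(A_2^*-\mu_2 I)^{-1}T^{-1}(A_2-\lambda_2 I)^{-1}(A_1-\lambda_1 I)^{-1}\mathbf{1},$$ $$u(\mu)=\mathbf{1}^*(A_1^*-\mu_1 I)^{-1}(A_2^*-\mu_2 I)^{-1}\Gamma-\mathrm{i}\begin{bmatrix}\mathbf{1}_m^*(\mathcal{A}_2^*-\mu_2 I_m)^{-1} & 0 & \mathbf{1}_n^*(\mathcal{A}_1^*-\mu_1 I_n)^{-1} & 0\end{bmatrix},$$ $$\widehat u(\lambda)=\widehat\Gamma(A_2-\lambda_2 I)^{-1}(A_1-\lambda_1 I)^{-1}\mathbf{1}+\mathrm{i}\begin{bmatrix}0\\ (\mathcal{A}_2-\lambda_2 I_m)^{-1}\mathbf{1}_m\\ 0\\ (\mathcal{A}_1-\lambda_1 I_n)^{-1}\mathbf{1}_n\end{bmatrix},$$ where in $u$ the blocks have lengths $m,m,n,n$ and in $\widehat u$ the blocks have heights $m,m,n,n$. Then for $p=1$ and $p=2$, $$\omega(\lambda,\mu)=\mathrm{i}(\lambda_p-\mu_p)^{-1}u(\mu)P_p\widehat u(\lambda).$$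
   Context: $\mathrm{i}$ is the imaginary unit, $I_r$ the $r\times r$ identity, $I=I_{mn}$, $\mathbf{1}_r$ the column of length $r$ with all entries $1$, $\mathbf{1}=\mathbf{1}_{mn}$; $^*$ is conjugate transpose. The entry $t_r^{(s)}$ of the block $\mathcal T_{i-k}$ at position $(j,\ell)$ sits in row $m(i-1)+j$, column $m(k-1)+\ell$ of $T$. For $N\ge1$ let $\mathcal{A}^{(N)}=\{a_{j-\ell}\}_{j,\ell=1}^N$ with $a_r=0$ for $r<0$, $a_0=\mathrm{i}/2$, $a_r=\mathrm{i}$ for $r>0$. Put $\mathcal A_1=\mathcal A^{(n)}$, $\mathcal A_2=\mathcal A^{(m)}$, $A_1=\{a_{i-k}I_m\}_{i,k=1}^n$ (i.e. $\mathcal A_1\otimes I_m$) and $A_2=\mathrm{diag}\{\mathcal A_2,\dots,\mathcal A_2\}$ ($n$ diagonal blocks). Define: $M_{11}=\mathrm{col}[\mathcal M_{11}^{(1)},\dots,\mathcal M_{11}^{(n)}]$ with $\mathcal M_{11}^{(i)}=\frac12\mathcal T_0+\sum_{s=1}^{i-1}\mathcal T_s$; $M_{21}=[I_m\ I_m\ \cdots\ I_m]$ ($m\times mn$); $M_{31}=M_{21}^*$; $M_{41}=[\mathcal M_{41}^{(1)}\ \cdots\ \mathcal M_{41}^{(n)}]$ with $\mathcal M_{41}^{(k)}=\frac12\mathcal T_0+\sum_{s=1}^{k-1}\mathcal T_{-s}$. For each $r$ let $\mathcal M_{12}^{(r)}$ be the $m\times1$ column whose $j$-th entry is $\frac12 t_r^{(0)}+\sum_{s=1}^{j-1}t_r^{(s)}$,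 and $\mathcal M_{42}^{(r)}$ the $1\times m$ row whose $\ell$-th entry is $\frac12 t_r^{(0)}+\sum_{s=1}^{\ell-1}t_r^{(-s)}$. Let $M_{12}=\{\mathcal M_{12}^{(i-k)}\}_{i,k=1}^n$ ($mn\times n$), $M_{22}=\mathrm{diag}\{\mathbf 1_m^*,\dots,\mathbf 1_m^*\}$ ($n\times mn$), $M_{32}=M_{22}^*$, $M_{42}=\{\mathcal M_{42}^{(i-k)}\}_{i,k=1}^n$ ($n\times mn$). Let $\Pi_p=[M_{1p}\ M_{3p}]$, $\widehat\Pi_p=\begin{bmatrix}M_{2p}\\ M_{4p}\end{bmatrix}$, $\Gamma_p=T^{-1}\Pi_p$, $\widehat\Gamma_p=\widehat\Pi_pT^{-1}$ ($p=1,2$), $\Gamma=[\Gamma_1\ \Gamma_2]$, $\widehat\Gamma=\begin{bmatrix}\widehat\Gamma_1\\ \widehat\Gamma_2\end{bmatrix}$. Finally $P_1=\mathrm{diag}\{I_{2m},0_{2n}\}$ and $P_2=I_{2(m+n)}-P_1$. *)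

theory Defs
  imports Complex_Main "Jordan_Normal_Form.Matrix"
begin

text \<open>All matrices are Jordan_Normal_Form matrices over complex numbers, indexed from 0.
  Row/column vectors are represented as 1 x N / N x 1 matrices.\<close>

definition cadj :: "complex mat \<Rightarrow> complex mat" where
  "cadj A = map_mat cnj (transpose_mat A)"

definition minv :: "complex mat \<Rightarrow> complex mat" where
  "minv A = (SOME B. B \<in> carrier_mat (dim_row A) (dim_row A) \<and>
       A * B = 1\<^sub>m (dim_row A) \<and> B * A = 1\<^sub>m (dim_row A))"

definition append_cols :: "complex mat \<Rightarrow> complex mat \<Rightarrow> complex mat" (infixr \<open>@\<^sub>c\<close> 65) where
  "A @\<^sub>c B = four_block_mat A B (0\<^sub>m 0 (dim_col A)) (0\<^sub>m 0 (dim_col B))"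

definition ones :: "nat \<Rightarrow> complex mat" where
  "ones r = mat r 1 (\<lambda>_. 1)"

text \<open>Toeplitz-block Toeplitz matrix; t r s stands for t_r^(s).
  Row index a = m*i + j (0-based), block i, inner j.\<close>
definition TBT :: "nat \<Rightarrow> nat \<Rightarrow> (int \<Rightarrow> int \<Rightarrow> complex) \<Rightarrow> complex mat" where
  "TBT m n t = mat (m*n) (m*n) (\<lambda>(a,b).
      t (int (a div m) - int (b div m)) (int (a mod m) - int (b mod m)))"

definition aval :: "int \<Rightarrow> complex" where
  "aval r = (if r < 0 then 0 else if r = 0 then \<i>/2 else \<i>)"

definition calA :: "nat \<Rightarrow> complex mat" where
  "calA N = mat N N (\<lambda>(j,l). aval (int j - int l))"

text \<open>A_1 = calA_n (x) I_m\<close>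
definition A1 :: "nat \<Rightarrow> nat \<Rightarrow> complex mat" where
  "A1 m n = mat (m*n) (m*n) (\<lambda>(a,b).
      if a mod m = b mod m then aval (int (a div m) - int (b div m)) else 0)"

text \<open>A_2 = diag(calA_m,...,calA_m)\<close>
definition A2 :: "nat \<Rightarrow> nat \<Rightarrow> complex mat" where
  "A2 m n = mat (m*n) (m*n) (\<lambda>(a,b).
      if a div m = b div m then aval (int (a mod m) - int (b mod m)) else 0)"

definition M11 :: "nat \<Rightarrow> nat \<Rightarrow> (int \<Rightarrow> int \<Rightarrow> complex) \<Rightarrow> complex mat" where
  "M11 m n t = mat (m*n) m (\<lambda>(a,l).
      t 0 (int (a mod m) - int l) / 2 +
      (\<Sum>s\<in>{1..a div m}. t (int s) (int (a mod m) - int l)))"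

definition M21 :: "nat \<Rightarrow> nat \<Rightarrow> complex mat" where
  "M21 m n = mat m (m*n) (\<lambda>(j,b). if j = b mod m then 1 else 0)"

definition M31 :: "nat \<Rightarrow> nat \<Rightarrow> complex mat" where
  "M31 m n = cadj (M21 m n)"

definition M41 :: "nat \<Rightarrow> nat \<Rightarrow> (int \<Rightarrow> int \<Rightarrow> complex) \<Rightarrow> complex mat" where
  "M41 m n t = mat m (m*n) (\<lambda>(j,b).
      t 0 (int j - int (b mod m)) / 2 +
      (\<Sum>s\<in>{1..b div m}. t (- int s) (int j - int (b mod m))))"

definition M12 :: "nat \<Rightarrow> nat \<Rightarrow> (int \<Rightarrow> int \<Rightarrow> complex) \<Rightarrow> complex mat" where
  "M12 m n t = mat (m*n) n (\<lambda>(a,k).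
      t (int (a div m) - int k) 0 / 2 +
      (\<Sum>s\<in>{1..a mod m}. t (int (a div m) - int k) (int s)))"

definition M22 :: "nat \<Rightarrow> nat \<Rightarrow> complex mat" where
  "M22 m n = mat n (m*n) (\<lambda>(i,b). if b div m = i then 1 else 0)"

definition M32 :: "nat \<Rightarrow> nat \<Rightarrow> complex mat" where
  "M32 m n = cadj (M22 m n)"

definition M42 :: "nat \<Rightarrow> nat \<Rightarrow> (int \<Rightarrow> int \<Rightarrow> complex) \<Rightarrow> complex mat" where
  "M42 m n t = mat n (m*n) (\<lambda>(i,b).
      t (int i - int (b div m)) 0 / 2 +
      (\<Sum>s\<in>{1..b mod m}. t (int i - int (b div m)) (- int s)))"

definition Gam :: "nat \<Rightarrow> nat \<Rightarrow> (int \<Rightarrow> int \<Rightarrow> complex) \<Rightarrow> complex mat" where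
  "Gam m n t = (let Ti = minv (TBT m n t) in
      (Ti * (M11 m n t @\<^sub>c M31 m n)) @\<^sub>c (Ti * (M12 m n t @\<^sub>c M32 m n)))"

definition Gamhat :: "nat \<Rightarrow> nat \<Rightarrow> (int \<Rightarrow> int \<Rightarrow> complex) \<Rightarrow> complex mat" where
  "Gamhat m n t = (let Ti = minv (TBT m n t) in
      ((M21 m n @\<^sub>r M41 m n t) * Ti) @\<^sub>r ((M22 m n @\<^sub>r M42 m n t) * Ti))"

definition Pmat :: "nat \<Rightarrow> nat \<Rightarrow> nat \<Rightarrow> complex mat" where
  "Pmat m n p = (let P1 = four_block_mat (1\<^sub>m (2*m)) (0\<^sub>m (2*m) (2*n))
                                        (0\<^sub>m (2*n) (2*m)) (0\<^sub>m (2*n) (2*n))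
     in if p = 1 then P1 else 1\<^sub>m (2*(m+n)) - P1)"

definition omega :: "nat \<Rightarrow> nat \<Rightarrow> (int \<Rightarrow> int \<Rightarrow> complex) \<Rightarrow> (nat \<Rightarrow> complex) \<Rightarrow> (nat \<Rightarrow> complex) \<Rightarrow> complex" where
  "omega m n t lam mu = (let N = m*n in
     (cadj (ones N) * minv (cadj (A1 m n) - mu 1 \<cdot>\<^sub>m 1\<^sub>m N)
        * minv (cadj (A2 m n) - mu 2 \<cdot>\<^sub>m 1\<^sub>m N) * minv (TBT m n t)
        * minv (A2 m n - lam 2 \<cdot>\<^sub>m 1\<^sub>m N) * minv (A1 m n - lam 1 \<cdot>\<^sub>m 1\<^sub>m N) * ones N) $$ (0,0))"

definition uvec :: "nat \<Rightarrow> nat \<Rightarrow> (int \<Rightarrow> int \<Rightarrow> complex) \<Rightarrow> (nat \<Rightarrow> complex) \<Rightarrow> complex mat" where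
  "uvec m n t mu = (let N = m*n in
     cadj (ones N) * minv (cadj (A1 m n) - mu 1 \<cdot>\<^sub>m 1\<^sub>m N)
        * minv (cadj (A2 m n) - mu 2 \<cdot>\<^sub>m 1\<^sub>m N) * Gam m n t
     - \<i> \<cdot>\<^sub>m ((cadj (ones m) * minv (cadj (calA m) - mu 2 \<cdot>\<^sub>m 1\<^sub>m m))
              @\<^sub>c 0\<^sub>m 1 m
              @\<^sub>c (cadj (ones n) * minv (cadj (calA n) - mu 1 \<cdot>\<^sub>m 1\<^sub>m n))
              @\<^sub>c 0\<^sub>m 1 n))"

definition uhat :: "nat \<Rightarrow> nat \<Rightarrow> (int \<Rightarrow> int \<Rightarrow> complex) \<Rightarrow> (nat \<Rightarrow> complex) \<Rightarrow> complex mat" where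
  "uhat m n t lam = (let N = m*n in
     Gamhat m n t * minv (A2 m n - lam 2 \<cdot>\<^sub>m 1\<^sub>m N) * minv (A1 m n - lam 1 \<cdot>\<^sub>m 1\<^sub>m N) * ones N
     + \<i> \<cdot>\<^sub>m (0\<^sub>m m 1
              @\<^sub>r (minv (calA m - lam 2 \<cdot>\<^sub>m 1\<^sub>m m) * ones m)
              @\<^sub>r 0\<^sub>m n 1
              @\<^sub>r (minv (calA n - lam 1 \<cdot>\<^sub>m 1\<^sub>m n) * ones n)))"

end

theory Submission
  imports Defs "Jordan_Normal_Form.Determinant"
begin

text \<open>For \<open>p = 1, 2\<close> the matrix \<open>T\<close> satisfies the displacement identity
  \<open>A\<^sub>p T - T A\<^sub>p\<^sup>* = \<i> \<Pi>\<^sub>p \<Pi>hat\<^sub>p\<close>. Multiplying it by \<open>T\<^sup>-\<^sup>1\<close> on both sides, by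
  \<open>(A\<^sub>p\<^sup>* - \<mu>\<^sub>p)\<^sup>-\<^sup>1\<close> on the left and by \<open>(A\<^sub>p - \<lambda>\<^sub>p)\<^sup>-\<^sup>1\<close> on the right expresses
  \<open>(A\<^sub>p\<^sup>* - \<mu>\<^sub>p)\<^sup>-\<^sup>1 T\<^sup>-\<^sup>1 - T\<^sup>-\<^sup>1 (A\<^sub>p - \<lambda>\<^sub>p)\<^sup>-\<^sup>1\<close> through \<open>\<Pi>\<^sub>p \<Pi>hat\<^sub>p\<close> plus the remainder
  \<open>(\<mu>\<^sub>p - \<lambda>\<^sub>p) (A\<^sub>p\<^sup>* - \<mu>\<^sub>p)\<^sup>-\<^sup>1 T\<^sup>-\<^sup>1 (A\<^sub>p - \<lambda>\<^sub>p)\<^sup>-\<^sup>1\<close>. Since \<open>A\<^sub>1\<close> and \<open>A\<^sub>2\<close> commute, so do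
  their resolvents, and sandwiching this identity between the resolvents of the other index applied
  to \<open>\<one>\<close> makes the remainder a multiple of \<open>\<omega>\<close>. The correction terms of \<open>u\<close> and \<open>u hat\<close> cancel
  the left-hand side, because \<open>M\<^sub>3\<^sub>p\<close> and \<open>M\<^sub>2\<^sub>p\<close> intertwine \<open>A\<^sub>p\<close> with the small matrices
  \<open>\<A>\<close> and preserve vectors of ones, so that for instance
  \<open>M\<^sub>3\<^sub>1 (\<A>\<^sub>2 - \<lambda>\<^sub>2)\<^sup>-\<^sup>1 \<one>\<^sub>m = (A\<^sub>2 - \<lambda>\<^sub>2)\<^sup>-\<^sup>1 \<one>\<close>.\<close>

section \<open>Matrix algebra\<close>

lemma mult_assoc_dims:
  "dim_col A = dim_row B \<Longrightarrow> dim_col B = dim_row C \<Longrightarrow> A * B * C = A * (B * (C :: 'a :: semiring_0 mat))"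
  by (rule assoc_mult_mat[of A "dim_row A" "dim_col A" B "dim_col B" C "dim_col C"]) auto

lemma mult_add_distrib_left_dims:
  "dim_col A = dim_row B \<Longrightarrow> dim_row B = dim_row C \<Longrightarrow> dim_col B = dim_col C \<Longrightarrow>
   A * (B + C) = A * B + A * (C :: 'a :: semiring_0 mat)"
  by (rule mult_add_distrib_mat[of A "dim_row A" "dim_col A" B "dim_col B"]) auto

lemma mult_minus_distrib_left_dims:
  "dim_col A = dim_row B \<Longrightarrow> dim_row B = dim_row C \<Longrightarrow> dim_col B = dim_col C \<Longrightarrow>
   A * (B - C) = A * B - A * (C :: 'a :: ring mat)"
  by (rule mult_minus_distrib_mat[of A "dim_row A" "dim_col A" B "dim_col B"]) auto

lemma mult_add_distrib_right_dims:
  "dim_col B = dim_row A \<Longrightarrow> dim_row B = dim_row C \<Longrightarrow> dim_col B = dim_col C \<Longrightarrow>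
   (B + C) * A = B * A + C * (A :: 'a :: semiring_0 mat)"
  by (rule add_mult_distrib_mat[of B "dim_row B" "dim_col B"]) auto

lemma mult_minus_distrib_right_dims:
  "dim_col B = dim_row A \<Longrightarrow> dim_row B = dim_row C \<Longrightarrow> dim_col B = dim_col C \<Longrightarrow>
   (B - C) * A = B * A - C * (A :: 'a :: ring mat)"
  by (rule minus_mult_distrib_mat[of B "dim_row B" "dim_col B"]) auto

lemma mult_smult_right_dims:
  "dim_col A = dim_row B \<Longrightarrow> A * (k \<cdot>\<^sub>m B) = k \<cdot>\<^sub>m (A * (B :: 'a :: comm_semiring_0 mat))"
  by (rule mult_smult_distrib[of A "dim_row A" "dim_col A" B "dim_col B"]) auto

lemma mult_smult_left_dims:
  "dim_col A = dim_row B \<Longrightarrow> (k \<cdot>\<^sub>m A) * B = k \<cdot>\<^sub>m (A * (B :: 'a :: comm_semiring_0 mat))"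
  by (rule mult_smult_assoc_mat[of A "dim_row A" "dim_col A" B "dim_col B"]) auto

lemmas mat_algebra_dims = mult_assoc_dims mult_add_distrib_left_dims mult_minus_distrib_left_dims
  mult_add_distrib_right_dims mult_minus_distrib_right_dims mult_smult_right_dims mult_smult_left_dims

lemma mult_assoc_inverse_left:
  "A * B = 1\<^sub>m k \<Longrightarrow> dim_row C = k \<Longrightarrow> dim_col A = dim_row B \<Longrightarrow> A * (B * C) = (C :: 'a :: semiring_1 mat)"
  by (metis left_mult_one_mat' mult_assoc_dims index_mult_mat(2,3) index_one_mat(3))

lemma minv_inverse:
  assumes "invertible_mat A" and "A \<in> carrier_mat k k"
  shows "minv A \<in> carrier_mat k k" "A * minv A = 1\<^sub>m k" "minv A * A = 1\<^sub>m k"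
proof -
  from assms(1) obtain B where AB: "A * B = 1\<^sub>m (dim_row A)" and BA: "B * A = 1\<^sub>m (dim_row B)"
    unfolding invertible_mat_def inverts_mat_def by blast
  have "B \<in> carrier_mat k k"
    using arg_cong[OF AB, of dim_col] arg_cong[OF BA, of dim_col] assms(2) by auto
  with AB BA assms(2)
  have "\<exists>B. B \<in> carrier_mat (dim_row A) (dim_row A) \<and> A * B = 1\<^sub>m (dim_row A) \<and> B * A = 1\<^sub>m (dim_row A)"
    by auto
  from someI_ex[OF this] assms(2) show "minv A \<in> carrier_mat k k" "A * minv A = 1\<^sub>m k" "minv A * A = 1\<^sub>m k"
    unfolding minv_def by auto
qed

lemma invertible_mat_iff_det_nonzero:
  fixes A :: "complex mat"
  assumes A: "A \<in> carrier_mat k k"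
  shows "invertible_mat A \<longleftrightarrow> det A \<noteq> 0"
proof
  assume inv: "invertible_mat A"
  from minv_inverse[OF inv A] det_mult[OF A, of "minv A"] show "det A \<noteq> 0"
    by (metis det_one mult_zero_left zero_neq_one)
next
  assume "det A \<noteq> 0"
  from det_non_zero_imp_unit[OF A this, of "()"]
  obtain B where "B \<in> carrier_mat k k" "B * A = 1\<^sub>m k" "A * B = 1\<^sub>m k"
    unfolding Units_def ring_mat_def by auto
  then show "invertible_mat A"
    using A unfolding invertible_mat_def inverts_mat_def square_mat.simps
    by (intro conjI exI[of _ B]) auto
qed

lemma det_lower_triangular_const_diag:
  fixes A :: "'a :: comm_ring_1 mat"
  assumes A: "A \<in> carrier_mat k k" and lower: "\<And>i j. i < j \<Longrightarrow> j < k \<Longrightarrow> A $$ (i,j) = 0"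
    and diag: "\<And>i. i < k \<Longrightarrow> A $$ (i,i) = c"
  shows "det A = c ^ k"
proof -
  have "diag_mat A = map (\<lambda>_. c) [0..<k]" using A diag unfolding diag_mat_def by auto
  then show ?thesis using det_lower_triangular[OF lower A] by (simp add: map_replicate_const)
qed

lemma det_upper_triangular_const_diag:
  fixes A :: "'a :: comm_ring_1 mat"
  assumes A: "A \<in> carrier_mat k k" and upper: "\<And>i j. j < i \<Longrightarrow> i < k \<Longrightarrow> A $$ (i,j) = 0"
    and diag: "\<And>i. i < k \<Longrightarrow> A $$ (i,i) = c"
  shows "det A = c ^ k"
proof -
  have "diag_mat A = map (\<lambda>_. c) [0..<k]" using A diag unfolding diag_mat_def by auto
  moreover have "upper_triangular A" using A upper by (intro upper_triangularI) auto
  ultimately show ?thesis using det_upper_triangular[OF _ A] by (simp add: map_replicate_const)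
qed

lemma inverses_commute:
  fixes M K M' K' :: "'a :: semiring_1 mat"
  assumes car: "M \<in> carrier_mat N N" "K \<in> carrier_mat N N" "M' \<in> carrier_mat N N" "K' \<in> carrier_mat N N"
    and inv: "M * M' = 1\<^sub>m N" "M' * M = 1\<^sub>m N" "K * K' = 1\<^sub>m N" "K' * K = 1\<^sub>m N"
    and commute: "M * K = K * M"
  shows "M' * K' = K' * M'"
proof -
  have "M * (K * (M' * K')) = (M * K) * (M' * K')"
    using car by (simp add: assoc_mult_mat[of _ N N _ N _ N])
  also have "\<dots> = K * (M * M') * K'"
    using car by (simp add: commute assoc_mult_mat[of _ N N _ N _ N])
  also have "\<dots> = 1\<^sub>m N" using car inv by simp
  finally have right_inv: "M * (K * (M' * K')) = 1\<^sub>m N" .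
  have "K' * M' = (K' * M') * (M * (K * (M' * K')))" using car right_inv by simp
  also have "\<dots> = (K' * (M' * M)) * (K * (M' * K'))" using car by (simp add: assoc_mult_mat[of _ N N _ N _ N])
  also have "\<dots> = K' * (K * (M' * K'))" using car inv by simp
  also have "\<dots> = M' * K'" using car by (simp add: mult_assoc_inverse_left[OF inv(4)])
  finally show ?thesis by simp
qed

lemma shifts_commute:
  fixes A B :: "'a :: comm_ring_1 mat"
  assumes "A \<in> carrier_mat N N" "B \<in> carrier_mat N N" and "A * B = B * A"
  shows "(A - a \<cdot>\<^sub>m 1\<^sub>m N) * (B - b \<cdot>\<^sub>m 1\<^sub>m N) = (B - b \<cdot>\<^sub>m 1\<^sub>m N) * (A - a \<cdot>\<^sub>m 1\<^sub>m N)"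
  using assms by (simp add: mat_algebra_dims, intro eq_matI) (simp_all add: algebra_simps del: index_mult_mat(1))

lemma four_block_mat_empty_corner:
  "dim_row D = 0 \<Longrightarrow> dim_col D = 0 \<Longrightarrow> four_block_mat A B C D = A"
  by (rule eq_matI) auto

lemma index_append_cols:
  "i < dim_row A \<Longrightarrow> j < dim_col A + dim_col B \<Longrightarrow>
     (A @\<^sub>c B) $$ (i,j) = (if j < dim_col A then A $$ (i,j) else B $$ (i, j - dim_col A))"
  "dim_row (A @\<^sub>c B) = dim_row A" "dim_col (A @\<^sub>c B) = dim_col A + dim_col B"
  unfolding append_cols_def by auto

lemma index_append_rows:
  "i < dim_row A + dim_row B \<Longrightarrow> j < dim_col A \<Longrightarrow>
     (A @\<^sub>r B) $$ (i,j) = (if i < dim_row A then A $$ (i,j) else B $$ (i - dim_row A, j))"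
  "dim_row (A @\<^sub>r B) = dim_row A + dim_row B" "dim_col (A @\<^sub>r B) = dim_col A"
  unfolding append_rows_def by auto

lemma append_cols_mult_append_rows:
  fixes A B C D :: "complex mat"
  assumes "dim_col A = dim_row C" "dim_col B = dim_row D" "dim_row A = dim_row B" "dim_col C = dim_col D"
  shows "(A @\<^sub>c B) * (C @\<^sub>r D) = A * C + B * D"
  unfolding append_cols_def append_rows_def
  apply (subst mult_four_block_mat[of A "dim_row A" "dim_col A" B "dim_col B" _ 0 _ C "dim_col C" _ 0])
  using assms by (auto intro!: four_block_mat_empty_corner)

lemma mult_append_cols:
  fixes M A B :: "complex mat"
  assumes "dim_col M = dim_row A" "dim_row A = dim_row B"
  shows "M * (A @\<^sub>c B) = (M * A) @\<^sub>c (M * B)"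
  using assms by (auto simp: index_append_cols scalar_prod_def intro!: eq_matI)

lemma append_rows_mult:
  fixes M A B :: "complex mat"
  assumes "dim_col A = dim_row M" "dim_col A = dim_col B"
  shows "(A @\<^sub>r B) * M = (A * M) @\<^sub>r (B * M)"
  using assms by (auto simp: index_append_rows scalar_prod_def intro!: eq_matI)

lemma smult_append_cols: "dim_row A = dim_row B \<Longrightarrow> c \<cdot>\<^sub>m (A @\<^sub>c B) = (c \<cdot>\<^sub>m A) @\<^sub>c (c \<cdot>\<^sub>m B)"
  by (rule eq_matI) (auto simp: index_append_cols)

lemma smult_append_rows: "dim_col A = dim_col B \<Longrightarrow> c \<cdot>\<^sub>m (A @\<^sub>r B) = (c \<cdot>\<^sub>m A) @\<^sub>r (c \<cdot>\<^sub>m B)"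
  by (rule eq_matI) (auto simp: index_append_rows)

lemma append_cols_minus:
  "dim_row A = dim_row B \<Longrightarrow> dim_row C = dim_row A \<Longrightarrow> dim_row D = dim_row A \<Longrightarrow>
   dim_col A = dim_col C \<Longrightarrow> dim_col B = dim_col D \<Longrightarrow> (A @\<^sub>c B) - (C @\<^sub>c D) = (A - C) @\<^sub>c (B - D)"
  by (rule eq_matI) (auto simp: index_append_cols)

lemma append_rows_plus:
  "dim_col A = dim_col B \<Longrightarrow> dim_col C = dim_col A \<Longrightarrow> dim_col D = dim_col A \<Longrightarrow>
   dim_row A = dim_row C \<Longrightarrow> dim_row B = dim_row D \<Longrightarrow> (A @\<^sub>r B) + (C @\<^sub>r D) = (A + C) @\<^sub>r (B + D)"
  by (rule eq_matI) (auto simp: index_append_rows)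

lemma append_cols_assoc:
  "dim_row A = dim_row B \<Longrightarrow> dim_row B = dim_row C \<Longrightarrow> (A @\<^sub>c B) @\<^sub>c C = A @\<^sub>c (B @\<^sub>c C)"
  by (rule eq_matI) (auto simp: index_append_cols)

lemma append_rows_assoc:
  "dim_col A = dim_col B \<Longrightarrow> dim_col B = dim_col C \<Longrightarrow> (A @\<^sub>r B) @\<^sub>r C = A @\<^sub>r (B @\<^sub>r C)"
  by (rule eq_matI) (auto simp: index_append_rows)

lemma append_cols_Pmat_append_rows:
  fixes U1 U2 V1 V2 :: "complex mat"
  assumes U: "U1 \<in> carrier_mat r (2*m)" "U2 \<in> carrier_mat r (2*n)"
    and V: "V1 \<in> carrier_mat (2*m) c" "V2 \<in> carrier_mat (2*n) c"
  shows "(U1 @\<^sub>c U2) * Pmat m n 1 * (V1 @\<^sub>r V2) = U1 * V1"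
    and "(U1 @\<^sub>c U2) * Pmat m n 2 * (V1 @\<^sub>r V2) = U2 * V2"
proof -
  have P2: "Pmat m n 2 = four_block_mat (0\<^sub>m (2*m) (2*m)) (0\<^sub>m (2*m) (2*n)) (0\<^sub>m (2*n) (2*m)) (1\<^sub>m (2*n))"
    unfolding Pmat_def Let_def by (rule eq_matI) auto
  have "(U1 @\<^sub>c U2) * Pmat m n 1 = U1 @\<^sub>c 0\<^sub>m r (2*n)"
    unfolding append_cols_def Pmat_def Let_def if_P[OF refl]
    apply (subst mult_four_block_mat[of U1 r "2*m" U2 "2*n" _ 0 _ _ "2*m" _ "2*n"])
    using U by (auto intro!: cong_four_block_mat eq_matI simp: scalar_prod_def)
  then show "(U1 @\<^sub>c U2) * Pmat m n 1 * (V1 @\<^sub>r V2) = U1 * V1"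
    using U V by (simp add: append_cols_mult_append_rows)
  have "(U1 @\<^sub>c U2) * Pmat m n 2 = 0\<^sub>m r (2*m) @\<^sub>c U2"
    unfolding append_cols_def P2
    apply (subst mult_four_block_mat[of U1 r "2*m" U2 "2*n" _ 0 _ _ "2*m" _ "2*n"])
    using U by (auto intro!: cong_four_block_mat eq_matI simp: scalar_prod_def)
  then show "(U1 @\<^sub>c U2) * Pmat m n 2 * (V1 @\<^sub>r V2) = U2 * V2"
    using U V by (simp add: append_cols_mult_append_rows)
qed

lemma resolvent_displacement:
  fixes T X A B R L P Q :: "complex mat"
  assumes car: "T \<in> carrier_mat N N" "X \<in> carrier_mat N N" "A \<in> carrier_mat N N" "B \<in> carrier_mat N N"
    "R \<in> carrier_mat N N" "L \<in> carrier_mat N N" "P \<in> carrier_mat N k" "Q \<in> carrier_mat k N"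
    and XT: "X * T = 1\<^sub>m N" and TX: "T * X = 1\<^sub>m N"
    and R: "R * (B - mu \<cdot>\<^sub>m 1\<^sub>m N) = 1\<^sub>m N" and L: "(A - lm \<cdot>\<^sub>m 1\<^sub>m N) * L = 1\<^sub>m N"
    and displacement: "A * T - T * B = c \<cdot>\<^sub>m (P * Q)"
  shows "R * X - X * L = c \<cdot>\<^sub>m (R * (X * (P * (Q * (X * L))))) + (mu - lm) \<cdot>\<^sub>m (R * (X * L))"
proof -
  have d: "dim_row T = N" "dim_col T = N" "dim_row X = N" "dim_col X = N" "dim_row A = N" "dim_col A = N"
    "dim_row B = N" "dim_col B = N" "dim_row R = N" "dim_col R = N" "dim_row L = N" "dim_col L = N"
    "dim_row P = N" "dim_col P = k" "dim_row Q = k" "dim_col Q = N" using car by auto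
  have "X * ((A * T - T * B) * X) = X * A - B * X"
    using d by (simp add: mat_algebra_dims mult_assoc_inverse_left[OF XT] mult_assoc_inverse_left[OF TX] TX)
  then have XA_BX: "X * A - B * X = c \<cdot>\<^sub>m (X * (P * (Q * X)))"
    using d by (simp add: displacement mat_algebra_dims)
  have shift: "X * (A - lm \<cdot>\<^sub>m 1\<^sub>m N) - (B - mu \<cdot>\<^sub>m 1\<^sub>m N) * X = (X * A - B * X) + (mu - lm) \<cdot>\<^sub>m X"
    using d by (auto simp: mat_algebra_dims algebra_simps intro!: eq_matI)
  have "R * X - X * L = R * (X * ((A - lm \<cdot>\<^sub>m 1\<^sub>m N) * L)) - (R * (B - mu \<cdot>\<^sub>m 1\<^sub>m N)) * (X * L)"
    using d R L by simp
  also have "\<dots> = R * ((X * (A - lm \<cdot>\<^sub>m 1\<^sub>m N) - (B - mu \<cdot>\<^sub>m 1\<^sub>m N) * X) * L)"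
    using d by (simp add: mat_algebra_dims)
  also have "\<dots> = c \<cdot>\<^sub>m (R * (X * (P * (Q * (X * L))))) + (mu - lm) \<cdot>\<^sub>m (R * (X * L))"
    unfolding shift XA_BX using d by (simp add: mat_algebra_dims)
  finally show ?thesis .
qed

text \<open>The boundary blocks \<open>r\<close>, \<open>l\<close> contribute
  \<open>\<i> x R X y - \<i> x X L y\<close>, which cancels the left-hand side of the resolvent identity
  sandwiched between \<open>x\<close> and \<open>y\<close>.\<close>

lemma displacement_bilinear_identity:
  fixes T X A B R L Pa Pb Qa Qb x y r l W Z :: "complex mat"
  assumes car: "T \<in> carrier_mat N N" "X \<in> carrier_mat N N" "A \<in> carrier_mat N N" "B \<in> carrier_mat N N"
    "R \<in> carrier_mat N N" "L \<in> carrier_mat N N"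
    "Pa \<in> carrier_mat N k" "Pb \<in> carrier_mat N k" "Qa \<in> carrier_mat k N" "Qb \<in> carrier_mat k N"
    "x \<in> carrier_mat 1 N" "y \<in> carrier_mat N 1" "r \<in> carrier_mat 1 k" "l \<in> carrier_mat k 1"
    and XT: "X * T = 1\<^sub>m N" and TX: "T * X = 1\<^sub>m N"
    and R: "R * (B - mu \<cdot>\<^sub>m 1\<^sub>m N) = 1\<^sub>m N" and L: "(A - lm \<cdot>\<^sub>m 1\<^sub>m N) * L = 1\<^sub>m N"
    and displacement: "A * T - T * B = \<i> \<cdot>\<^sub>m ((Pa @\<^sub>c Pb) * (Qa @\<^sub>r Qb))"
    and Pb_l: "Pb * l = y" and r_Qa: "r * Qa = x" and W: "W = x * R" and Z: "Z = L * y"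
  shows "(W * (X * (Pa @\<^sub>c Pb)) - \<i> \<cdot>\<^sub>m (r @\<^sub>c 0\<^sub>m 1 k)) * ((Qa @\<^sub>r Qb) * X * Z + \<i> \<cdot>\<^sub>m (0\<^sub>m k 1 @\<^sub>r l))
     = (\<i> * (mu - lm)) \<cdot>\<^sub>m (x * (R * (X * (L * y))))"
proof -
  have d: "dim_row x = 1" "dim_col x = N" "dim_row y = N" "dim_col y = 1" "dim_row R = N" "dim_col R = N"
    "dim_row X = N" "dim_col X = N" "dim_row L = N" "dim_col L = N" "dim_row Pa = N" "dim_col Pa = k"
    "dim_row Pb = N" "dim_col Pb = k" "dim_row Qa = k" "dim_col Qa = N" "dim_row Qb = k" "dim_col Qb = N"
    "dim_row r = 1" "dim_col r = k" "dim_row l = k" "dim_col l = 1" using car by auto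
  have resolvent: "R * X - X * L = \<i> \<cdot>\<^sub>m (R * (X * ((Pa @\<^sub>c Pb) * ((Qa @\<^sub>r Qb) * (X * L)))))
      + (mu - lm) \<cdot>\<^sub>m (R * (X * L))"
    using car by (intro resolvent_displacement[OF _ _ _ _ _ _ _ _ XT TX R L displacement])
      (auto simp: index_append_cols index_append_rows)
  have P_l: "(Pa @\<^sub>c Pb) * (0\<^sub>m k 1 @\<^sub>r l) = y"
    using d by (subst append_cols_mult_append_rows) (auto simp: Pb_l[symmetric] intro!: eq_matI)
  have r_Q: "(r @\<^sub>c 0\<^sub>m 1 k) * ((Qa @\<^sub>r Qb) * M) = x * M" if "dim_row M = N" for M
  proof -
    have "(r @\<^sub>c 0\<^sub>m 1 k) * (Qa @\<^sub>r Qb) = x"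
      using d by (subst append_cols_mult_append_rows) (auto simp: r_Qa[symmetric] intro!: eq_matI)
    then show ?thesis
      using d that by (simp add: mult_assoc_dims[symmetric] index_append_cols index_append_rows)
  qed
  have r_l: "(r @\<^sub>c 0\<^sub>m 1 k) * (0\<^sub>m k 1 @\<^sub>r l) = 0\<^sub>m 1 1"
    using d by (subst append_cols_mult_append_rows) (auto intro!: eq_matI)
  have "x * ((R * X - X * L) * y) = x * ((\<i> \<cdot>\<^sub>m (R * (X * ((Pa @\<^sub>c Pb) * ((Qa @\<^sub>r Qb) * (X * L)))))
      + (mu - lm) \<cdot>\<^sub>m (R * (X * L))) * y)"
    by (simp add: resolvent)
  then have "x * (R * (X * y)) - x * (X * (L * y))
      = \<i> \<cdot>\<^sub>m (x * (R * (X * ((Pa @\<^sub>c Pb) * ((Qa @\<^sub>r Qb) * (X * (L * y)))))))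
        + (mu - lm) \<cdot>\<^sub>m (x * (R * (X * (L * y))))"
    using d by (simp add: mat_algebra_dims index_append_cols index_append_rows)
  from arg_cong[OF this, of "\<lambda>M. M $$ (0,0)"]
  have "(x * (R * (X * ((Pa @\<^sub>c Pb) * ((Qa @\<^sub>r Qb) * (X * (L * y))))))) $$ (0,0)
      = - \<i> * ((x * (R * (X * y))) $$ (0,0) - (x * (X * (L * y))) $$ (0,0)
        - (mu - lm) * (x * (R * (X * (L * y)))) $$ (0,0))"
    using d by (simp add: index_append_cols index_append_rows algebra_simps del: index_mult_mat(1))
  then show ?thesis
    unfolding W Z using d P_l r_Q r_l
    by (simp add: mat_algebra_dims index_append_cols index_append_rows, intro eq_matI)
      (simp_all add: index_append_cols index_append_rows algebra_simps del: index_mult_mat(1))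
qed

lemma intertwiner_resolvent_col:
  fixes K S C C' L v w :: "complex mat"
  assumes car: "K \<in> carrier_mat N N" "S \<in> carrier_mat N k" "C \<in> carrier_mat k k"
      "C' \<in> carrier_mat k k" "L \<in> carrier_mat N N" "v \<in> carrier_mat k 1"
    and intertwine: "K * S = S * C" and Sv: "S * v = w"
    and C': "(C - lm \<cdot>\<^sub>m 1\<^sub>m k) * C' = 1\<^sub>m k" and L: "L * (K - lm \<cdot>\<^sub>m 1\<^sub>m N) = 1\<^sub>m N"
  shows "S * (C' * v) = L * w"
proof -
  have d: "dim_row K = N" "dim_col K = N" "dim_row S = N" "dim_col S = k" "dim_row C = k" "dim_col C = k"
    "dim_row C' = k" "dim_col C' = k" "dim_row L = N" "dim_col L = N" "dim_row v = k" "dim_col v = 1"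
    using car by auto
  have shifted: "(K - lm \<cdot>\<^sub>m 1\<^sub>m N) * S = S * (C - lm \<cdot>\<^sub>m 1\<^sub>m k)"
    using d by (simp add: mat_algebra_dims intertwine)
  have "L * w = L * (S * ((C - lm \<cdot>\<^sub>m 1\<^sub>m k) * (C' * v)))"
    using d Sv C' by (simp add: mult_assoc_dims[symmetric])
  also have "\<dots> = L * ((K - lm \<cdot>\<^sub>m 1\<^sub>m N) * (S * (C' * v)))"
    using d shifted by (simp add: mult_assoc_dims[symmetric])
  also have "\<dots> = S * (C' * v)"
    using d L by (simp add: mult_assoc_dims[symmetric])
  finally show ?thesis by simp
qed

lemma intertwiner_resolvent_row:
  fixes K S C C' R v w :: "complex mat"
  assumes car: "K \<in> carrier_mat N N" "S \<in> carrier_mat k N" "C \<in> carrier_mat k k"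
      "C' \<in> carrier_mat k k" "R \<in> carrier_mat N N" "v \<in> carrier_mat 1 k"
    and intertwine: "S * K = C * S" and vS: "v * S = w"
    and C': "C' * (C - mu \<cdot>\<^sub>m 1\<^sub>m k) = 1\<^sub>m k" and R: "(K - mu \<cdot>\<^sub>m 1\<^sub>m N) * R = 1\<^sub>m N"
  shows "v * C' * S = w * R"
proof -
  have d: "dim_row K = N" "dim_col K = N" "dim_row S = k" "dim_col S = N" "dim_row C = k" "dim_col C = k"
    "dim_row C' = k" "dim_col C' = k" "dim_row R = N" "dim_col R = N" "dim_row v = 1" "dim_col v = k"
    using car by auto
  have shifted: "S * (K - mu \<cdot>\<^sub>m 1\<^sub>m N) = (C - mu \<cdot>\<^sub>m 1\<^sub>m k) * S"
    using d by (simp add: mat_algebra_dims intertwine)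
  have "w * R = v * (C' * ((C - mu \<cdot>\<^sub>m 1\<^sub>m k) * (S * R)))"
    using d vS C' by (simp add: mult_assoc_dims[symmetric])
  also have "\<dots> = v * (C' * (S * ((K - mu \<cdot>\<^sub>m 1\<^sub>m N) * R)))"
    using d shifted by (simp add: mult_assoc_dims[symmetric])
  also have "\<dots> = v * C' * S"
    using d R by (simp add: mult_assoc_dims)
  finally show ?thesis by simp
qed

section \<open>Block indexing\<close>

lemma block_index_less:
  fixes i j m n :: nat
  assumes "i < n" "j < m"
  shows "i * m + j < m * n"
proof -
  have "i * m + j < (i + 1) * m" using assms by simp
  also have "\<dots> \<le> n * m" using assms by (intro mult_right_mono) auto
  finally show ?thesis by (simp add: mult.commute)
qed

lemma sum_lessThan_mult_div_mod:
  fixes m n :: nat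
  shows "(\<Sum>c<m*n. f (c div m) (c mod m)) = (\<Sum>i<n. \<Sum>j<m. f i j :: 'a :: comm_monoid_add)"
proof (cases "m = 0")
  case False
  have "bij_betw (\<lambda>(i, j). i * m + j) ({..<n} \<times> {..<m}) {..<m*n}"
  proof (rule bij_betw_byWitness[where f' = "\<lambda>c. (c div m, c mod m)"])
    show "(\<lambda>(i, j). i * m + j) ` ({..<n} \<times> {..<m}) \<subseteq> {..<m*n}"
      by (auto simp: block_index_less)
  qed (use False in \<open>auto simp: less_mult_imp_div_less mult.commute\<close>)
  then have "(\<Sum>c<m*n. f (c div m) (c mod m)) = (\<Sum>(i, j)\<in>{..<n} \<times> {..<m}. f i j)"
    using False by (subst sum.reindex_bij_betw[symmetric]) (auto simp: case_prod_beta intro!: sum.cong)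
  then show ?thesis by (simp add: sum.cartesian_product)
qed simp

lemma block_index_cases:
  fixes a m n :: nat
  assumes "a < m * n"
  obtains i j where "i < n" "j < m" "a = i * m + j"
proof
  show "a div m < n" using assms by (simp add: less_mult_imp_div_less mult.commute)
  show "a mod m < m" using assms by (metis mod_less_divisor gr_zeroI mult_eq_0_iff not_less_zero)
qed simp

lemma index_mult_mat_sum:
  "i < dim_row A \<Longrightarrow> j < dim_col B \<Longrightarrow> dim_col A = dim_row B \<Longrightarrow> (A * B) $$ (i,j) = (\<Sum>k<dim_row B. A $$ (i,k) * B $$ (k,j))"
  by (simp add: scalar_prod_def atLeast0LessThan)

lemma index_mult_mat_blocks:
  assumes "i < dim_row A" "j < dim_col B" "dim_col A = m * n" "dim_row B = m * n"
  shows "(A * B) $$ (i,j) = (\<Sum>k<n. \<Sum>l<m. A $$ (i, k*m+l) * B $$ (k*m+l, j))"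
proof -
  have "(A * B) $$ (i,j) = (\<Sum>c<m*n. A $$ (i,c) * B $$ (c,j))"
    using assms by (simp add: index_mult_mat_sum del: index_mult_mat(1))
  also have "\<dots> = (\<Sum>k<n. \<Sum>l<m. A $$ (i, k*m+l) * B $$ (k*m+l, j))"
    using sum_lessThan_mult_div_mod[of "\<lambda>k l. A $$ (i, k*m+l) * B $$ (k*m+l, j)" m n] by simp
  finally show ?thesis .
qed

lemma index_cadj:
  "i < dim_col A \<Longrightarrow> j < dim_row A \<Longrightarrow> cadj A $$ (i,j) = cnj (A $$ (j,i))"
  "dim_row (cadj A) = dim_col A" "dim_col (cadj A) = dim_row A"
  unfolding cadj_def by auto

lemma cadj_cadj: "cadj (cadj A) = A"
  by (rule eq_matI) (auto simp: index_cadj)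

lemma cadj_mult: "dim_col A = dim_row B \<Longrightarrow> cadj (A * B) = cadj B * cadj A"
  by (rule eq_matI) (auto simp: index_cadj scalar_prod_def mult.commute intro!: sum.cong)

section \<open>The structured matrices\<close>

lemma mat_dims:
  "dim_row (TBT m n t) = m*n" "dim_col (TBT m n t) = m*n"
  "dim_row (A1 m n) = m*n" "dim_col (A1 m n) = m*n"
  "dim_row (A2 m n) = m*n" "dim_col (A2 m n) = m*n"
  "dim_row (calA k) = k" "dim_col (calA k) = k"
  "dim_row (M11 m n t) = m*n" "dim_col (M11 m n t) = m"
  "dim_row (M21 m n) = m" "dim_col (M21 m n) = m*n"
  "dim_row (M31 m n) = m*n" "dim_col (M31 m n) = m"
  "dim_row (M41 m n t) = m" "dim_col (M41 m n t) = m*n"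
  "dim_row (M12 m n t) = m*n" "dim_col (M12 m n t) = n"
  "dim_row (M22 m n) = n" "dim_col (M22 m n) = m*n"
  "dim_row (M32 m n) = m*n" "dim_col (M32 m n) = n"
  "dim_row (M42 m n t) = n" "dim_col (M42 m n t) = m*n"
  "dim_row (ones k) = k" "dim_col (ones k) = 1"
  by (auto simp: TBT_def A1_def A2_def calA_def M11_def M21_def M31_def M41_def M12_def M22_def
      M32_def M42_def ones_def index_cadj)

lemma block_entries:
  fixes m n i j k l :: nat
  assumes "i < n" "j < m" "k < n" "l < m"
  shows "TBT m n t $$ (i*m+j, k*m+l) = t (int i - int k) (int j - int l)"
    and "A1 m n $$ (i*m+j, k*m+l) = (if j = l then aval (int i - int k) else 0)"
    and "A2 m n $$ (i*m+j, k*m+l) = (if i = k then aval (int j - int l) else 0)"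
    and "cadj (A1 m n) $$ (i*m+j, k*m+l) = (if j = l then cnj (aval (int k - int i)) else 0)"
    and "cadj (A2 m n) $$ (i*m+j, k*m+l) = (if i = k then cnj (aval (int l - int j)) else 0)"
  using assms block_index_less[of i n j m] block_index_less[of k n l m]
  by (simp_all add: TBT_def A1_def A2_def index_cadj)

lemma block_row_entries:
  fixes m n i j l :: nat
  assumes "i < n" "j < m" "l < m"
  shows "M11 m n t $$ (i*m+j, l) = t 0 (int j - int l) / 2 + (\<Sum>s\<in>{1..i}. t (int s) (int j - int l))"
    and "M21 m n $$ (l, i*m+j) = (if l = j then 1 else 0)"
    and "M31 m n $$ (i*m+j, l) = (if l = j then 1 else 0)"
    and "M41 m n t $$ (l, i*m+j) = t 0 (int l - int j) / 2 + (\<Sum>s\<in>{1..i}. t (- int s) (int l - int j))"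
  using assms block_index_less[of i n j m]
  by (simp_all add: M11_def M21_def M31_def M41_def index_cadj)

lemma block_col_entries:
  fixes m n i j k :: nat
  assumes "i < n" "j < m" "k < n"
  shows "M12 m n t $$ (i*m+j, k) = t (int i - int k) 0 / 2 + (\<Sum>s\<in>{1..j}. t (int i - int k) (int s))"
    and "M22 m n $$ (k, i*m+j) = (if i = k then 1 else 0)"
    and "M32 m n $$ (i*m+j, k) = (if i = k then 1 else 0)"
    and "M42 m n t $$ (k, i*m+j) = t (int k - int i) 0 / 2 + (\<Sum>s\<in>{1..j}. t (int k - int i) (- int s))"
  using assms block_index_less[of i n j m]
  by (simp_all add: M12_def M22_def M32_def M42_def index_cadj)

lemma cnj_aval: "cnj (aval r) = - aval r"
  by (simp add: aval_def complex_eq_iff)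

lemma sum_aval_mult:
  assumes "i < N"
  shows "(\<Sum>k<N. aval (int i - int k) * g k) = \<i> * (\<Sum>k<i. g k) + \<i> / 2 * g i"
proof -
  have "(\<Sum>k<N. aval (int i - int k) * g k)
      = (\<Sum>k<Suc i. aval (int i - int k) * g k) + (\<Sum>k\<in>{Suc i..<N}. aval (int i - int k) * g k)"
    using assms by (metis Suc_leI atLeast0LessThan sum.atLeastLessThan_concat zero_le)
  also have "(\<Sum>k\<in>{Suc i..<N}. aval (int i - int k) * g k) = 0"
    by (rule sum.neutral) (auto simp: aval_def)
  also have "(\<Sum>k<Suc i. aval (int i - int k) * g k) = (\<Sum>k<i. \<i> * g k) + \<i> / 2 * g i"
    by (simp add: aval_def)
  finally show ?thesis by (simp add: sum_distrib_left)
qed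

lemma sum_hook_telescope:
  "(\<Sum>k<i. g (int k - int i')) + (\<Sum>k<i'. g (int i - int k)) + g (int i - int i')
     = g 0 + (\<Sum>s\<in>{1..i}. g (int s)) + (\<Sum>s\<in>{1..i'}. g (- int s) :: 'a :: ab_group_add)"
proof (induction i)
  case 0
  show ?case by (induction i') (auto simp: sum.cl_ivl_Suc algebra_simps)
next
  case (Suc i)
  have "(\<Sum>k<i'. g (int (Suc i) - int k)) - (\<Sum>k<i'. g (int i - int k))
      = (\<Sum>k<i'. g (int (Suc i) - int k) - g (int (Suc i) - int (Suc k)))"
    by (simp add: sum_subtractf)
  also have "\<dots> = g (int (Suc i)) - g (int (Suc i) - int i')"
    by (subst sum_lessThan_telescope') simp
  finally have "(\<Sum>k<Suc i. g (int k - int i')) + (\<Sum>k<i'. g (int (Suc i) - int k)) + g (int (Suc i) - int i')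
      = ((\<Sum>k<i. g (int k - int i')) + (\<Sum>k<i'. g (int i - int k)) + g (int i - int i')) + g (int (Suc i))"
    by (simp add: algebra_simps)
  with Suc.IH show ?case by (simp add: sum.cl_ivl_Suc)
qed

lemma aval_displacement_sum:
  assumes "i < N" "i' < N"
  shows "(\<Sum>k<N. aval (int i - int k) * g (int k - int i')) - (\<Sum>k<N. g (int i - int k) * cnj (aval (int i' - int k)))
    = \<i> * ((g 0 / 2 + (\<Sum>s\<in>{1..i}. g (int s))) + (g 0 / 2 + (\<Sum>s\<in>{1..i'}. g (- int s))))"
proof -
  have "(\<Sum>k<N. g (int i - int k) * cnj (aval (int i' - int k))) = - (\<Sum>k<N. aval (int i' - int k) * g (int i - int k))"
    by (simp add: cnj_aval sum_negf[symmetric] mult.commute)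
  also have "\<dots> = - (\<i> * (\<Sum>k<i'. g (int i - int k)) + \<i> / 2 * g (int i - int i'))"
    using sum_aval_mult[OF assms(2)] by simp
  finally have adjoint_sum: "(\<Sum>k<N. g (int i - int k) * cnj (aval (int i' - int k)))
      = - (\<i> * (\<Sum>k<i'. g (int i - int k)) + \<i> / 2 * g (int i - int i'))" .
  have "(\<Sum>k<N. aval (int i - int k) * g (int k - int i')) - (\<Sum>k<N. g (int i - int k) * cnj (aval (int i' - int k)))
      = \<i> * ((\<Sum>k<i. g (int k - int i')) + (\<Sum>k<i'. g (int i - int k)) + g (int i - int i'))"
    using sum_aval_mult[OF assms(1), of "\<lambda>k. g (int k - int i')"] unfolding adjoint_sum
    by (simp add: algebra_simps)
  then show ?thesis by (simp only: sum_hook_telescope) (simp add: algebra_simps)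
qed

lemma index_calA: "i < k \<Longrightarrow> j < k \<Longrightarrow> calA k $$ (i,j) = aval (int i - int j)"
  by (simp add: calA_def)

lemma index_ones: "i < k \<Longrightarrow> ones k $$ (i,0) = 1"
  by (simp add: ones_def)

lemma if_zero_mult:
  "(if P then a else 0) * b = (if P then a * b else (0 :: 'a :: mult_zero))"
  "b * (if P then a else 0) = (if P then b * a else (0 :: 'a :: mult_zero))"
  by simp_all

lemma sum_if_zero: "(\<Sum>x\<in>A. if P then f x else 0) = (if P then sum f A else 0)"
  by simp

lemmas block_simps = mat_dims index_calA index_ones index_cadj(2,3) block_index_less block_entries block_row_entries
  block_col_entries if_zero_mult sum_if_zero

lemma A1_displacement:
  "A1 m n * TBT m n t - TBT m n t * cadj (A1 m n) = \<i> \<cdot>\<^sub>m (M11 m n t * M21 m n + M31 m n * M41 m n t)"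
proof (rule eq_matI)
  fix a b assume "a < dim_row (\<i> \<cdot>\<^sub>m (M11 m n t * M21 m n + M31 m n * M41 m n t))"
    and "b < dim_col (\<i> \<cdot>\<^sub>m (M11 m n t * M21 m n + M31 m n * M41 m n t))"
  then have "a < m * n" "b < m * n" by (simp_all add: mat_dims)
  then obtain i j i' j' where ij: "i < n" "j < m" "a = i * m + j" and ij': "i' < n" "j' < m" "b = i' * m + j'"
    by (metis block_index_cases)
  define g where "g r = t r (int j - int j')" for r
  have "(A1 m n * TBT m n t) $$ (a,b) = (\<Sum>k<n. aval (int i - int k) * g (int k - int i'))"
    using ij ij' by (simp add: index_mult_mat_blocks block_simps g_def del: index_mult_mat(1))
  moreover have "(TBT m n t * cadj (A1 m n)) $$ (a,b) = (\<Sum>k<n. g (int i - int k) * cnj (aval (int i' - int k)))"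
    using ij ij' by (simp add: index_mult_mat_blocks block_simps g_def del: index_mult_mat(1))
  moreover have "(M11 m n t * M21 m n) $$ (a,b) = g 0 / 2 + (\<Sum>s\<in>{1..i}. g (int s))"
    using ij ij' by (simp add: index_mult_mat_sum block_simps g_def del: index_mult_mat(1))
  moreover have "(M31 m n * M41 m n t) $$ (a,b) = g 0 / 2 + (\<Sum>s\<in>{1..i'}. g (- int s))"
    using ij ij' by (simp add: index_mult_mat_sum block_simps g_def del: index_mult_mat(1))
  ultimately show "(A1 m n * TBT m n t - TBT m n t * cadj (A1 m n)) $$ (a,b)
      = (\<i> \<cdot>\<^sub>m (M11 m n t * M21 m n + M31 m n * M41 m n t)) $$ (a,b)"
    using ij ij' block_index_less[OF ij(1,2)] block_index_less[OF ij'(1,2)]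
    by (simp add: mat_dims index_cadj aval_displacement_sum del: index_mult_mat(1))
qed (simp_all add: mat_dims index_cadj)

lemma A2_displacement:
  "A2 m n * TBT m n t - TBT m n t * cadj (A2 m n) = \<i> \<cdot>\<^sub>m (M12 m n t * M22 m n + M32 m n * M42 m n t)"
proof (rule eq_matI)
  fix a b assume "a < dim_row (\<i> \<cdot>\<^sub>m (M12 m n t * M22 m n + M32 m n * M42 m n t))"
    and "b < dim_col (\<i> \<cdot>\<^sub>m (M12 m n t * M22 m n + M32 m n * M42 m n t))"
  then have "a < m * n" "b < m * n" by (simp_all add: mat_dims)
  then obtain i j i' j' where ij: "i < n" "j < m" "a = i * m + j" and ij': "i' < n" "j' < m" "b = i' * m + j'"
    by (metis block_index_cases)
  define g where "g r = t (int i - int i') r" for r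
  have "(A2 m n * TBT m n t) $$ (a,b) = (\<Sum>l<m. aval (int j - int l) * g (int l - int j'))"
    using ij ij' by (simp add: index_mult_mat_blocks block_simps g_def del: index_mult_mat(1))
  moreover have "(TBT m n t * cadj (A2 m n)) $$ (a,b) = (\<Sum>l<m. g (int j - int l) * cnj (aval (int j' - int l)))"
    using ij ij' by (simp add: index_mult_mat_blocks block_simps g_def del: index_mult_mat(1))
  moreover have "(M12 m n t * M22 m n) $$ (a,b) = g 0 / 2 + (\<Sum>s\<in>{1..j}. g (int s))"
    using ij ij' by (simp add: index_mult_mat_sum block_simps g_def del: index_mult_mat(1))
  moreover have "(M32 m n * M42 m n t) $$ (a,b) = g 0 / 2 + (\<Sum>s\<in>{1..j'}. g (- int s))"
    using ij ij' by (simp add: index_mult_mat_sum block_simps g_def del: index_mult_mat(1))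
  ultimately show "(A2 m n * TBT m n t - TBT m n t * cadj (A2 m n)) $$ (a,b)
      = (\<i> \<cdot>\<^sub>m (M12 m n t * M22 m n + M32 m n * M42 m n t)) $$ (a,b)"
    using ij ij' block_index_less[OF ij(1,2)] block_index_less[OF ij'(1,2)]
    by (simp add: mat_dims index_cadj aval_displacement_sum del: index_mult_mat(1))
qed (simp_all add: mat_dims index_cadj)

lemma A1_A2_commute: "A1 m n * A2 m n = A2 m n * A1 m n"
proof (rule eq_matI)
  fix a b assume "a < dim_row (A2 m n * A1 m n)" "b < dim_col (A2 m n * A1 m n)"
  then have "a < m * n" "b < m * n" by (simp_all add: mat_dims)
  then obtain i j i' j' where "i < n" "j < m" "a = i * m + j" "i' < n" "j' < m" "b = i' * m + j'"
    by (metis block_index_cases)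
  then show "(A1 m n * A2 m n) $$ (a,b) = (A2 m n * A1 m n) $$ (a,b)"
    by (simp add: index_mult_mat_blocks block_simps del: index_mult_mat(1))
qed (simp_all add: mat_dims)

lemma A2_M31_intertwine: "A2 m n * M31 m n = M31 m n * calA m"
proof (rule eq_matI)
  fix a l assume "a < dim_row (M31 m n * calA m)" "l < dim_col (M31 m n * calA m)"
  then have "a < m * n" "l < m" by (simp_all add: mat_dims)
  then obtain i j where "i < n" "j < m" "a = i * m + j" "l < m"
    by (metis block_index_cases)
  then show "(A2 m n * M31 m n) $$ (a,l) = (M31 m n * calA m) $$ (a,l)"
    by (simp add: index_mult_mat_blocks index_mult_mat_sum block_simps del: index_mult_mat(1))
qed (simp_all add: mat_dims)

lemma A1_M32_intertwine: "A1 m n * M32 m n = M32 m n * calA n"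
proof (rule eq_matI)
  fix a k assume "a < dim_row (M32 m n * calA n)" "k < dim_col (M32 m n * calA n)"
  then have "a < m * n" "k < n" by (simp_all add: mat_dims)
  then obtain i j where "i < n" "j < m" "a = i * m + j" "k < n"
    by (metis block_index_cases)
  then show "(A1 m n * M32 m n) $$ (a,k) = (M32 m n * calA n) $$ (a,k)"
    by (simp add: index_mult_mat_blocks index_mult_mat_sum block_simps del: index_mult_mat(1))
qed (simp_all add: mat_dims)

lemma M31_ones: "M31 m n * ones m = ones (m * n)"
proof (rule eq_matI)
  fix a c assume "a < dim_row (ones (m * n))" "c < dim_col (ones (m * n))"
  then obtain i j where "i < n" "j < m" "a = i * m + j" "c = 0"
    by (metis block_index_cases mat_dims(25,26) less_one)
  then show "(M31 m n * ones m) $$ (a,c) = ones (m * n) $$ (a,c)"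
    by (simp add: index_mult_mat_sum block_simps del: index_mult_mat(1))
qed (simp_all add: mat_dims)

lemma M32_ones: "M32 m n * ones n = ones (m * n)"
proof (rule eq_matI)
  fix a c assume "a < dim_row (ones (m * n))" "c < dim_col (ones (m * n))"
  then obtain i j where "i < n" "j < m" "a = i * m + j" "c = 0"
    by (metis block_index_cases mat_dims(25,26) less_one)
  then show "(M32 m n * ones n) $$ (a,c) = ones (m * n) $$ (a,c)"
    by (simp add: index_mult_mat_sum block_simps del: index_mult_mat(1))
qed (simp_all add: mat_dims)

lemma cadj_A1_A2_commute: "cadj (A1 m n) * cadj (A2 m n) = cadj (A2 m n) * cadj (A1 m n)"
  by (metis A1_A2_commute cadj_mult mat_dims(3-6))

lemma M21_cadj_A2_intertwine: "M21 m n * cadj (A2 m n) = cadj (calA m) * M21 m n"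
  using arg_cong[OF A2_M31_intertwine, of cadj] by (simp add: cadj_mult mat_dims M31_def cadj_cadj index_cadj)

lemma M22_cadj_A1_intertwine: "M22 m n * cadj (A1 m n) = cadj (calA n) * M22 m n"
  using arg_cong[OF A1_M32_intertwine, of cadj] by (simp add: cadj_mult mat_dims M32_def cadj_cadj index_cadj)

lemma ones_M21: "cadj (ones m) * M21 m n = cadj (ones (m * n))"
  using arg_cong[OF M31_ones, of cadj] by (simp add: cadj_mult mat_dims M31_def cadj_cadj index_cadj)

lemma ones_M22: "cadj (ones n) * M22 m n = cadj (ones (m * n))"
  using arg_cong[OF M32_ones, of cadj] by (simp add: cadj_mult mat_dims M32_def cadj_cadj index_cadj)

lemma aval_neg: "r < 0 \<Longrightarrow> aval r = 0"
  by (simp add: aval_def)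

lemma det_A1_shift: "det (A1 m n - lm \<cdot>\<^sub>m 1\<^sub>m (m*n)) = (\<i>/2 - lm) ^ (m*n)"
proof (rule det_lower_triangular_const_diag)
  fix a b assume "a < b" "b < m*n"
  moreover have "a mod m = b mod m \<Longrightarrow> a div m < b div m" using \<open>a < b\<close>
    by (metis div_mod_decomp add_less_cancel_right mult_less_cancel2 less_or_eq_imp_le nat_less_le mult.commute)
  ultimately show "(A1 m n - lm \<cdot>\<^sub>m 1\<^sub>m (m*n)) $$ (a,b) = 0" by (auto simp: A1_def aval_neg)
qed (auto simp: A1_def aval_def mat_dims)

lemma det_A2_shift: "det (A2 m n - lm \<cdot>\<^sub>m 1\<^sub>m (m*n)) = (\<i>/2 - lm) ^ (m*n)"
proof (rule det_lower_triangular_const_diag)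
  fix a b assume "a < b" "b < m*n"
  moreover have "a div m = b div m \<Longrightarrow> a mod m < b mod m" using \<open>a < b\<close>
    by (metis div_mod_decomp add_less_cancel_left)
  ultimately show "(A2 m n - lm \<cdot>\<^sub>m 1\<^sub>m (m*n)) $$ (a,b) = 0" by (auto simp: A2_def aval_neg)
qed (auto simp: A2_def aval_def mat_dims)

lemma det_cadj_A1_shift: "det (cadj (A1 m n) - mu \<cdot>\<^sub>m 1\<^sub>m (m*n)) = (- \<i>/2 - mu) ^ (m*n)"
proof (rule det_upper_triangular_const_diag)
  fix a b assume "b < a" "a < m*n"
  moreover have "a mod m = b mod m \<Longrightarrow> b div m < a div m" using \<open>b < a\<close>
    by (metis div_mod_decomp add_less_cancel_right mult_less_cancel2 less_or_eq_imp_le nat_less_le mult.commute)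
  ultimately show "(cadj (A1 m n) - mu \<cdot>\<^sub>m 1\<^sub>m (m*n)) $$ (a,b) = 0"
    by (auto simp: A1_def aval_neg index_cadj mat_dims)
qed (auto simp: A1_def aval_def mat_dims index_cadj)

lemma det_cadj_A2_shift: "det (cadj (A2 m n) - mu \<cdot>\<^sub>m 1\<^sub>m (m*n)) = (- \<i>/2 - mu) ^ (m*n)"
proof (rule det_upper_triangular_const_diag)
  fix a b assume "b < a" "a < m*n"
  moreover have "a div m = b div m \<Longrightarrow> b mod m < a mod m" using \<open>b < a\<close>
    by (metis div_mod_decomp add_less_cancel_left)
  ultimately show "(cadj (A2 m n) - mu \<cdot>\<^sub>m 1\<^sub>m (m*n)) $$ (a,b) = 0"
    by (auto simp: A2_def aval_neg index_cadj mat_dims)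
qed (auto simp: A2_def aval_def mat_dims index_cadj)

lemma det_calA_shift: "det (calA k - lm \<cdot>\<^sub>m 1\<^sub>m k) = (\<i>/2 - lm) ^ k"
  by (rule det_lower_triangular_const_diag) (auto simp: calA_def aval_def mat_dims)

lemma det_cadj_calA_shift: "det (cadj (calA k) - mu \<cdot>\<^sub>m 1\<^sub>m k) = (- \<i>/2 - mu) ^ k"
  by (rule det_upper_triangular_const_diag) (auto simp: calA_def aval_def mat_dims index_cadj)

lemma invertible_shift_iff:
  fixes A :: "complex mat"
  assumes "A \<in> carrier_mat k k" "k > 0" "det (A - lm \<cdot>\<^sub>m 1\<^sub>m k) = (c - lm) ^ k"
  shows "invertible_mat (A - lm \<cdot>\<^sub>m 1\<^sub>m k) \<longleftrightarrow> lm \<noteq> c"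
proof -
  have "A - lm \<cdot>\<^sub>m 1\<^sub>m k \<in> carrier_mat k k" using assms(1) by auto
  then show ?thesis using assms(2,3) by (auto simp: invertible_mat_iff_det_nonzero)
qed

text \<open>The hypotheses of the theorem only concern \<open>A\<^sub>1\<close>, \<open>A\<^sub>2\<close>; the resolvents of \<open>\<A>\<^sub>1\<close>,
  \<open>\<A>\<^sub>2\<close> occurring in \<open>u\<close> and \<open>u hat\<close> exist because all these matrices are triangular with the same
  constant diagonal.\<close>

lemma invertible_calA_shifts:
  assumes "m > 0" "n > 0"
  shows "invertible_mat (A1 m n - lm \<cdot>\<^sub>m 1\<^sub>m (m*n)) \<Longrightarrow> invertible_mat (calA n - lm \<cdot>\<^sub>m 1\<^sub>m n)"
    and "invertible_mat (A2 m n - lm \<cdot>\<^sub>m 1\<^sub>m (m*n)) \<Longrightarrow> invertible_mat (calA m - lm \<cdot>\<^sub>m 1\<^sub>m m)"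
    and "invertible_mat (cadj (A1 m n) - mu \<cdot>\<^sub>m 1\<^sub>m (m*n)) \<Longrightarrow> invertible_mat (cadj (calA n) - mu \<cdot>\<^sub>m 1\<^sub>m n)"
    and "invertible_mat (cadj (A2 m n) - mu \<cdot>\<^sub>m 1\<^sub>m (m*n)) \<Longrightarrow> invertible_mat (cadj (calA m) - mu \<cdot>\<^sub>m 1\<^sub>m m)"
proof -
  have car: "A1 m n \<in> carrier_mat (m*n) (m*n)" "A2 m n \<in> carrier_mat (m*n) (m*n)"
    "cadj (A1 m n) \<in> carrier_mat (m*n) (m*n)" "cadj (A2 m n) \<in> carrier_mat (m*n) (m*n)"
    "calA k \<in> carrier_mat k k" "cadj (calA k) \<in> carrier_mat k k" for k
    by (auto simp: carrier_matI mat_dims index_cadj)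
  have "m * n > 0" using assms by simp
  note iff = invertible_shift_iff[OF car(1) this det_A1_shift] invertible_shift_iff[OF car(2) this det_A2_shift]
    invertible_shift_iff[OF car(3) this det_cadj_A1_shift] invertible_shift_iff[OF car(4) this det_cadj_A2_shift]
    invertible_shift_iff[OF car(5) assms(1) det_calA_shift] invertible_shift_iff[OF car(5) assms(2) det_calA_shift]
    invertible_shift_iff[OF car(6) assms(1) det_cadj_calA_shift] invertible_shift_iff[OF car(6) assms(2) det_cadj_calA_shift]
  show "invertible_mat (A1 m n - lm \<cdot>\<^sub>m 1\<^sub>m (m*n)) \<Longrightarrow> invertible_mat (calA n - lm \<cdot>\<^sub>m 1\<^sub>m n)"
    and "invertible_mat (A2 m n - lm \<cdot>\<^sub>m 1\<^sub>m (m*n)) \<Longrightarrow> invertible_mat (calA m - lm \<cdot>\<^sub>m 1\<^sub>m m)"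
    and "invertible_mat (cadj (A1 m n) - mu \<cdot>\<^sub>m 1\<^sub>m (m*n)) \<Longrightarrow> invertible_mat (cadj (calA n) - mu \<cdot>\<^sub>m 1\<^sub>m n)"
    and "invertible_mat (cadj (A2 m n) - mu \<cdot>\<^sub>m 1\<^sub>m (m*n)) \<Longrightarrow> invertible_mat (cadj (calA m) - mu \<cdot>\<^sub>m 1\<^sub>m m)"
    unfolding iff by simp_all
qed

section \<open>Resolvents and the proposition\<close>

locale tbt_resolvents =
  fixes m n :: nat and t :: "int \<Rightarrow> int \<Rightarrow> complex" and lam mu :: "nat \<Rightarrow> complex"
  assumes m_pos: "m \<ge> 1" and n_pos: "n \<ge> 1"
    and invertible_T: "invertible_mat (TBT m n t)"
    and invertible_A1: "invertible_mat (A1 m n - lam 1 \<cdot>\<^sub>m 1\<^sub>m (m*n))"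
    and invertible_A2: "invertible_mat (A2 m n - lam 2 \<cdot>\<^sub>m 1\<^sub>m (m*n))"
    and invertible_cadj_A1: "invertible_mat (cadj (A1 m n) - mu 1 \<cdot>\<^sub>m 1\<^sub>m (m*n))"
    and invertible_cadj_A2: "invertible_mat (cadj (A2 m n) - mu 2 \<cdot>\<^sub>m 1\<^sub>m (m*n))"
begin

abbreviation N :: nat where "N \<equiv> m * n"

definition X where "X = minv (TBT m n t)"
definition L1 where "L1 = minv (A1 m n - lam 1 \<cdot>\<^sub>m 1\<^sub>m N)"
definition L2 where "L2 = minv (A2 m n - lam 2 \<cdot>\<^sub>m 1\<^sub>m N)"
definition R1 where "R1 = minv (cadj (A1 m n) - mu 1 \<cdot>\<^sub>m 1\<^sub>m N)"
definition R2 where "R2 = minv (cadj (A2 m n) - mu 2 \<cdot>\<^sub>m 1\<^sub>m N)"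

definition l1 where "l1 = minv (calA n - lam 1 \<cdot>\<^sub>m 1\<^sub>m n) * ones n"
definition l2 where "l2 = minv (calA m - lam 2 \<cdot>\<^sub>m 1\<^sub>m m) * ones m"
definition r1 where "r1 = cadj (ones n) * minv (cadj (calA n) - mu 1 \<cdot>\<^sub>m 1\<^sub>m n)"
definition r2 where "r2 = cadj (ones m) * minv (cadj (calA m) - mu 2 \<cdot>\<^sub>m 1\<^sub>m m)"

definition Pi1 where "Pi1 = M11 m n t @\<^sub>c M31 m n"
definition Pi2 where "Pi2 = M12 m n t @\<^sub>c M32 m n"
definition Pihat1 where "Pihat1 = M21 m n @\<^sub>r M41 m n t"
definition Pihat2 where "Pihat2 = M22 m n @\<^sub>r M42 m n t"

definition W where "W = cadj (ones N) * R1 * R2"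
definition Z where "Z = L2 * L1 * ones N"

lemma carriers:
  "TBT m n t \<in> carrier_mat N N" "A1 m n \<in> carrier_mat N N" "A2 m n \<in> carrier_mat N N"
  "cadj (A1 m n) \<in> carrier_mat N N" "cadj (A2 m n) \<in> carrier_mat N N"
  "M11 m n t \<in> carrier_mat N m" "M21 m n \<in> carrier_mat m N" "M31 m n \<in> carrier_mat N m" "M41 m n t \<in> carrier_mat m N"
  "M12 m n t \<in> carrier_mat N n" "M22 m n \<in> carrier_mat n N" "M32 m n \<in> carrier_mat N n" "M42 m n t \<in> carrier_mat n N"
  "ones k \<in> carrier_mat k 1" "cadj (ones k) \<in> carrier_mat 1 k"
  by (auto simp: carrier_matI mat_dims index_cadj)

lemma shifted_carriers:
  "A1 m n - lam 1 \<cdot>\<^sub>m 1\<^sub>m N \<in> carrier_mat N N" "A2 m n - lam 2 \<cdot>\<^sub>m 1\<^sub>m N \<in> carrier_mat N N"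
  "cadj (A1 m n) - mu 1 \<cdot>\<^sub>m 1\<^sub>m N \<in> carrier_mat N N" "cadj (A2 m n) - mu 2 \<cdot>\<^sub>m 1\<^sub>m N \<in> carrier_mat N N"
  "calA k - lm \<cdot>\<^sub>m 1\<^sub>m k \<in> carrier_mat k k" "cadj (calA k) - lm \<cdot>\<^sub>m 1\<^sub>m k \<in> carrier_mat k k"
  by (auto simp: carrier_matI mat_dims index_cadj)

lemmas X_inverse = minv_inverse[OF invertible_T carriers(1), folded X_def]
lemmas L1_inverse = minv_inverse[OF invertible_A1 shifted_carriers(1), folded L1_def]
lemmas L2_inverse = minv_inverse[OF invertible_A2 shifted_carriers(2), folded L2_def]
lemmas R1_inverse = minv_inverse[OF invertible_cadj_A1 shifted_carriers(3), folded R1_def]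
lemmas R2_inverse = minv_inverse[OF invertible_cadj_A2 shifted_carriers(4), folded R2_def]

lemma dims_pos: "m > 0" "n > 0"
  using m_pos n_pos by auto

lemmas calA1_inverse = minv_inverse[OF invertible_calA_shifts(1)[OF dims_pos invertible_A1] shifted_carriers(5)]
lemmas calA2_inverse = minv_inverse[OF invertible_calA_shifts(2)[OF dims_pos invertible_A2] shifted_carriers(5)]
lemmas cadj_calA1_inverse =
  minv_inverse[OF invertible_calA_shifts(3)[OF dims_pos invertible_cadj_A1] shifted_carriers(6)]
lemmas cadj_calA2_inverse =
  minv_inverse[OF invertible_calA_shifts(4)[OF dims_pos invertible_cadj_A2] shifted_carriers(6)]

lemma boundary_carriers:
  "l1 \<in> carrier_mat n 1" "l2 \<in> carrier_mat m 1" "r1 \<in> carrier_mat 1 n" "r2 \<in> carrier_mat 1 m"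
  unfolding l1_def l2_def r1_def r2_def
  by (rule mult_carrier_mat[OF calA1_inverse(1) carriers(14)] mult_carrier_mat[OF calA2_inverse(1) carriers(14)]
      mult_carrier_mat[OF carriers(15) cadj_calA1_inverse(1)] mult_carrier_mat[OF carriers(15) cadj_calA2_inverse(1)])+

lemma Pi_carriers:
  "Pi1 \<in> carrier_mat N (2*m)" "Pihat1 \<in> carrier_mat (2*m) N"
  "Pi2 \<in> carrier_mat N (2*n)" "Pihat2 \<in> carrier_mat (2*n) N"
  by (auto simp: Pi1_def Pihat1_def Pi2_def Pihat2_def carrier_matI mat_dims index_append_cols index_append_rows)

lemma displacement1: "A1 m n * TBT m n t - TBT m n t * cadj (A1 m n) = \<i> \<cdot>\<^sub>m (Pi1 * Pihat1)"
  unfolding Pi1_def Pihat1_def A1_displacement by (subst append_cols_mult_append_rows) (simp_all add: mat_dims)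

lemma displacement2: "A2 m n * TBT m n t - TBT m n t * cadj (A2 m n) = \<i> \<cdot>\<^sub>m (Pi2 * Pihat2)"
  unfolding Pi2_def Pihat2_def A2_displacement by (subst append_cols_mult_append_rows) (simp_all add: mat_dims)

lemma M31_l2: "M31 m n * l2 = L2 * ones N"
  unfolding l2_def
  by (rule intertwiner_resolvent_col[OF carriers(3,8) _ calA2_inverse(1) L2_inverse(1) carriers(14)
        A2_M31_intertwine M31_ones calA2_inverse(2) L2_inverse(3)]) (simp add: carrier_matI mat_dims)

lemma M32_l1: "M32 m n * l1 = L1 * ones N"
  unfolding l1_def
  by (rule intertwiner_resolvent_col[OF carriers(2,12) _ calA1_inverse(1) L1_inverse(1) carriers(14)
        A1_M32_intertwine M32_ones calA1_inverse(2) L1_inverse(3)]) (simp add: carrier_matI mat_dims)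

lemma r2_M21: "r2 * M21 m n = cadj (ones N) * R2"
  unfolding r2_def
  by (rule intertwiner_resolvent_row[OF carriers(5,7) _ cadj_calA2_inverse(1) R2_inverse(1) carriers(15)
        M21_cadj_A2_intertwine ones_M21 cadj_calA2_inverse(3) R2_inverse(2)])
    (simp add: carrier_matI mat_dims index_cadj)

lemma r1_M22: "r1 * M22 m n = cadj (ones N) * R1"
  unfolding r1_def
  by (rule intertwiner_resolvent_row[OF carriers(4,11) _ cadj_calA1_inverse(1) R1_inverse(1) carriers(15)
        M22_cadj_A1_intertwine ones_M22 cadj_calA1_inverse(3) R1_inverse(2)])
    (simp add: carrier_matI mat_dims index_cadj)

lemma L1_L2_commute: "L1 * L2 = L2 * L1"
  by (rule inverses_commute[OF shifted_carriers(1,2) L1_inverse(1) L2_inverse(1) L1_inverse(2,3) L2_inverse(2,3)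
        shifts_commute[OF carriers(2,3) A1_A2_commute]])

lemma R1_R2_commute: "R1 * R2 = R2 * R1"
  by (rule inverses_commute[OF shifted_carriers(3,4) R1_inverse(1) R2_inverse(1) R1_inverse(2,3) R2_inverse(2,3)
        shifts_commute[OF carriers(4,5) cadj_A1_A2_commute]])

lemma omega_eq: "omega m n t lam mu = (W * (X * Z)) $$ (0,0)"
proof -
  have "omega m n t lam mu = (cadj (ones N) * R1 * R2 * X * L2 * L1 * ones N) $$ (0,0)"
    unfolding omega_def Let_def X_def L1_def L2_def R1_def R2_def ..
  also have "cadj (ones N) * R1 * R2 * X * L2 * L1 * ones N = W * (X * Z)"
    using X_inverse(1) L1_inverse(1) L2_inverse(1) R1_inverse(1) R2_inverse(1)
    by (simp add: W_def Z_def mult_assoc_dims mat_dims index_cadj(2,3))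
  finally show ?thesis .
qed

lemma W_Z_carriers: "W \<in> carrier_mat 1 N" "Z \<in> carrier_mat N 1"
  unfolding W_def Z_def
  by (rule mult_carrier_mat[OF mult_carrier_mat[OF carriers(15) R1_inverse(1)] R2_inverse(1)]
      mult_carrier_mat[OF mult_carrier_mat[OF L2_inverse(1) L1_inverse(1)] carriers(14)])+

definition u_block1 where "u_block1 = W * (X * Pi1) - \<i> \<cdot>\<^sub>m (r2 @\<^sub>c 0\<^sub>m 1 m)"
definition u_block2 where "u_block2 = W * (X * Pi2) - \<i> \<cdot>\<^sub>m (r1 @\<^sub>c 0\<^sub>m 1 n)"
definition uhat_block1 where "uhat_block1 = Pihat1 * X * Z + \<i> \<cdot>\<^sub>m (0\<^sub>m m 1 @\<^sub>r l2)"
definition uhat_block2 where "uhat_block2 = Pihat2 * X * Z + \<i> \<cdot>\<^sub>m (0\<^sub>m n 1 @\<^sub>r l1)"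

lemma block_carriers:
  "u_block1 \<in> carrier_mat 1 (2*m)" "u_block2 \<in> carrier_mat 1 (2*n)"
  "uhat_block1 \<in> carrier_mat (2*m) 1" "uhat_block2 \<in> carrier_mat (2*n) 1"
  using boundary_carriers W_Z_carriers X_inverse(1) Pi_carriers
  unfolding u_block1_def u_block2_def uhat_block1_def uhat_block2_def
  by (intro carrier_matI; simp add: index_append_cols index_append_rows)+

lemma uvec_blocks: "uvec m n t mu = u_block1 @\<^sub>c u_block2"
proof -
  have "uvec m n t mu = W * ((X * Pi1) @\<^sub>c (X * Pi2)) - \<i> \<cdot>\<^sub>m (r2 @\<^sub>c (0\<^sub>m 1 m @\<^sub>c (r1 @\<^sub>c 0\<^sub>m 1 n)))"
    by (simp add: uvec_def Gam_def Let_def W_def X_def R1_def R2_def Pi1_def Pi2_def r1_def r2_def)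
  also have "r2 @\<^sub>c (0\<^sub>m 1 m @\<^sub>c (r1 @\<^sub>c 0\<^sub>m 1 n)) = (r2 @\<^sub>c 0\<^sub>m 1 m) @\<^sub>c (r1 @\<^sub>c 0\<^sub>m 1 n)"
    using boundary_carriers by (simp add: append_cols_assoc index_append_cols)
  finally show ?thesis
    using boundary_carriers Pi_carriers X_inverse(1) W_Z_carriers
    by (simp add: u_block1_def u_block2_def mult_append_cols smult_append_cols append_cols_minus
        index_append_cols)
qed

lemma uhat_blocks: "uhat m n t lam = uhat_block1 @\<^sub>r uhat_block2"
proof -
  have "uhat m n t lam = ((Pihat1 * X) @\<^sub>r (Pihat2 * X)) * L2 * L1 * ones N
      + \<i> \<cdot>\<^sub>m (0\<^sub>m m 1 @\<^sub>r (l2 @\<^sub>r (0\<^sub>m n 1 @\<^sub>r l1)))"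
    by (simp add: uhat_def Gamhat_def Let_def X_def L1_def L2_def Pihat1_def Pihat2_def l1_def l2_def)
  also have "((Pihat1 * X) @\<^sub>r (Pihat2 * X)) * L2 * L1 * ones N = ((Pihat1 * X) @\<^sub>r (Pihat2 * X)) * Z"
    using Pi_carriers X_inverse(1) L1_inverse(1) L2_inverse(1)
    by (simp add: mult_assoc_dims index_append_rows mat_dims Z_def)
  also have "0\<^sub>m m 1 @\<^sub>r (l2 @\<^sub>r (0\<^sub>m n 1 @\<^sub>r l1)) = (0\<^sub>m m 1 @\<^sub>r l2) @\<^sub>r (0\<^sub>m n 1 @\<^sub>r l1)"
    using boundary_carriers by (simp add: append_rows_assoc index_append_rows)
  finally show ?thesis
    using boundary_carriers Pi_carriers X_inverse(1) W_Z_carriers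
    by (simp add: uhat_block1_def uhat_block2_def append_rows_mult smult_append_rows append_rows_plus
        index_append_rows)
qed

lemma u_block1_uhat_block1: "u_block1 * uhat_block1 = (\<i> * (mu 1 - lam 1)) \<cdot>\<^sub>m (W * (X * Z))"
proof -
  note car = carriers(1) X_inverse(1) carriers(2,4) R1_inverse(1) L1_inverse(1) carriers(6,8,7,9)
    mult_carrier_mat[OF carriers(15) R2_inverse(1)] mult_carrier_mat[OF L2_inverse(1) carriers(14)]
    boundary_carriers(4,2)
  have W: "W = cadj (ones N) * R2 * R1"
    using R1_inverse(1) R2_inverse(1) by (simp add: W_def mult_assoc_dims mat_dims index_cadj(2,3) R1_R2_commute)
  have Z: "Z = L1 * (L2 * ones N)"
    using L1_inverse(1) L2_inverse(1) by (simp add: Z_def mult_assoc_dims[symmetric] mat_dims L1_L2_commute)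
  have "u_block1 * uhat_block1
      = (\<i> * (mu 1 - lam 1)) \<cdot>\<^sub>m (cadj (ones N) * R2 * (R1 * (X * (L1 * (L2 * ones N)))))"
    unfolding u_block1_def uhat_block1_def Pi1_def Pihat1_def
    by (rule displacement_bilinear_identity[OF car X_inverse(3,2) R1_inverse(3) L1_inverse(2)
          displacement1[unfolded Pi1_def Pihat1_def] M31_l2 r2_M21 W Z])
  also have "cadj (ones N) * R2 * (R1 * (X * (L1 * (L2 * ones N)))) = W * (X * Z)"
    using car R2_inverse(1) L2_inverse(1) by (simp add: W Z mult_assoc_dims mat_dims index_cadj(2,3))
  finally show ?thesis .
qed

lemma u_block2_uhat_block2: "u_block2 * uhat_block2 = (\<i> * (mu 2 - lam 2)) \<cdot>\<^sub>m (W * (X * Z))"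
proof -
  note car = carriers(1) X_inverse(1) carriers(3,5) R2_inverse(1) L2_inverse(1) carriers(10,12,11,13)
    mult_carrier_mat[OF carriers(15) R1_inverse(1)] mult_carrier_mat[OF L1_inverse(1) carriers(14)]
    boundary_carriers(3,1)
  have Z: "Z = L2 * (L1 * ones N)"
    using carriers(14) L1_inverse(1) L2_inverse(1) by (simp add: Z_def mult_assoc_dims mat_dims)
  have "u_block2 * uhat_block2
      = (\<i> * (mu 2 - lam 2)) \<cdot>\<^sub>m (cadj (ones N) * R1 * (R2 * (X * (L2 * (L1 * ones N)))))"
    unfolding u_block2_def uhat_block2_def Pi2_def Pihat2_def
    by (rule displacement_bilinear_identity[OF car X_inverse(3,2) R2_inverse(3) L2_inverse(2)
          displacement2[unfolded Pi2_def Pihat2_def] M32_l1 r1_M22 W_def Z])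
  also have "cadj (ones N) * R1 * (R2 * (X * (L2 * (L1 * ones N)))) = W * (X * Z)"
    using car R1_inverse(1) L1_inverse(1) by (simp add: W_def Z mult_assoc_dims mat_dims index_cadj(2,3))
  finally show ?thesis .
qed

end

theorem proposition2p1:
  fixes m n p :: nat and t :: "int \<Rightarrow> int \<Rightarrow> complex" and lam mu :: "nat \<Rightarrow> complex"
  assumes "m \<ge> 1" and "n \<ge> 1"
    and "invertible_mat (TBT m n t)"
    and "invertible_mat (A1 m n - lam 1 \<cdot>\<^sub>m 1\<^sub>m (m*n))"
    and "invertible_mat (A2 m n - lam 2 \<cdot>\<^sub>m 1\<^sub>m (m*n))"
    and "invertible_mat (cadj (A1 m n) - mu 1 \<cdot>\<^sub>m 1\<^sub>m (m*n))"
    and "invertible_mat (cadj (A2 m n) - mu 2 \<cdot>\<^sub>m 1\<^sub>m (m*n))"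
    and "p \<in> {1, 2}"
    and "lam p \<noteq> mu p"
  shows "omega m n t lam mu
           = \<i> * inverse (lam p - mu p) * (uvec m n t mu * Pmat m n p * uhat m n t lam) $$ (0,0)"
proof -
  interpret tbt_resolvents m n t lam mu
    using assms(1-7) by unfold_locales
  have "uvec m n t mu * Pmat m n p * uhat m n t lam = (\<i> * (mu p - lam p)) \<cdot>\<^sub>m (W * (X * Z))"
    using assms(8) append_cols_Pmat_append_rows[OF block_carriers]
    by (auto simp: uvec_blocks uhat_blocks u_block1_uhat_block1 u_block2_uhat_block2)
  moreover have "\<i> * inverse (lam p - mu p) * (\<i> * (mu p - lam p)) = 1"
    using assms(9) by (simp add: field_simps)
  ultimately show ?thesis
    using W_Z_carriers X_inverse(1) by (simp add: omega_eq mult.assoc[symmetric])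
qed

end
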